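(* Let $\mathcal{V}_t$ be a variety of $\Omega$-algebras satisfying $t(x,y)=x$ for some $t\in T_2$, let $X$ be a set, let $B=X\mathcal{V}_t^{\,p}$ be the free $\mathcal{V}_t^{\,p}$-algebra over $X$, and let $\delta$ be any congruence of $B$. Then $B/\delta$ is a semilattice sum of $\mathcal{V}_t$-algebras, i.e. $B/\delta\in\mathcal{V}_t\circ\mathcal{S}$. Moreover, if $\varrho_B$ is the semilattice replica congruence of $B$ and $\psi=\delta\vee\varrho_B$, then $\psi/\delta$ is the semilattice replica congruence of $B/\delta$, and each $\psi/\delta$-class lies in $\mathcal{V}_t$.
   Context: Standing conventions: $\Omega$-algebras are of a plural similarity type (no nullary operation symbols, at least one operation symbol of arity $\ge2$). $T_n$ is the set of $\Omega$-terms in $x_1,\dots,x_n$ in which all $n$ variables occur. An identity is regular if the same variables occur on both sides. $\mathcal{S}$ is the variety of $\Omega$-algebras satisfying all regular identities ($\Omega$-semilattices). $\mathcal{V}\circ\mathcal{S}$ is the class of $\Omega$-algebras $A$ having a congruence $\theta$ with $A/\theta\in\mathcal{S}$ and every $\theta$-class (a subalgebra) in $\mathcal{V}$ (a semilattice sum of $\mathcal{V}$-algebras). The semilattice replica congruence of an algebra $A$ is the smallest congruence $\varrho$ of $A$ with $A/\varrho\in\mathcal{S}$. Prolongation: for an identity $\sigma$ of the form $u(y_1,\dots,y_n)=v(y_1,\dots,y_n)$ and $m\ge1$, $\sigma^p_m$ is the set of identities $u(r_1,\dots,r_n)=v(r_1,\dots,r_n)$ obtained by substituting $r_i(x_1,\dots,x_m)$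 for $y_i$, with $r_i$ ranging over $T_m$; $\sigma^p=\bigcup_m\sigma^p_m$; $\Sigma^p=\bigcup_{\sigma\in\Sigma}\sigma^p$. For a variety $\mathcal{V}$, $\mathcal{V}^p$ is the variety defined by $\mathrm{Id}(\mathcal{V})^p$, $\mathrm{Id}(\mathcal{V})$ being all identities true in $\mathcal{V}$. *)

theory Defs
  imports Main
begin

text \<open>Omega-terms over variables of type 'v; the signature is the type 'f of
  operation symbols together with an arity function ar.\<close>

datatype ('f,'v) trm = Var 'v | Fun 'f "('f,'v) trm list"

type_synonym ('a,'f) alg = "'a set \<times> ('f \<Rightarrow> 'a list \<Rightarrow> 'a)"

type_synonym ('f,'v) ident = "('f,'v) trm \<times> ('f,'v) trm"

fun vars :: "('f,'v) trm \<Rightarrow> 'v set" where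
  "vars (Var v) = {v}"
| "vars (Fun f ts) = (\<Union>t\<in>set ts. vars t)"

fun wf_trm :: "('f \<Rightarrow> nat) \<Rightarrow> ('f,'v) trm \<Rightarrow> bool" where
  "wf_trm ar (Var v) = True"
| "wf_trm ar (Fun f ts) = (length ts = ar f \<and> (\<forall>t\<in>set ts. wf_trm ar t))"

fun eval :: "('a,'f) alg \<Rightarrow> ('v \<Rightarrow> 'a) \<Rightarrow> ('f,'v) trm \<Rightarrow> 'a" where
  "eval A h (Var v) = h v"
| "eval A h (Fun f ts) = snd A f (map (eval A h) ts)"

fun subst :: "('v \<Rightarrow> ('f,'w) trm) \<Rightarrow> ('f,'v) trm \<Rightarrow> ('f,'w) trm" where
  "subst s (Var v) = s v"
| "subst s (Fun f ts) = Fun f (map (subst s) ts)"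

definition plural :: "('f \<Rightarrow> nat) \<Rightarrow> bool" where
  "plural ar \<longleftrightarrow> (\<forall>f. ar f \<ge> 1) \<and> (\<exists>f. ar f \<ge> 2)"

definition is_alg :: "('f \<Rightarrow> nat) \<Rightarrow> ('a,'f) alg \<Rightarrow> bool" where
  "is_alg ar A \<longleftrightarrow> (\<forall>f as. length as = ar f \<and> set as \<subseteq> fst A \<longrightarrow> snd A f as \<in> fst A)"

definition satisfies :: "('a,'f) alg \<Rightarrow> ('f,'v) ident \<Rightarrow> bool" where
  "satisfies A \<sigma> \<longleftrightarrow> (\<forall>h. (\<forall>x. h x \<in> fst A) \<longrightarrow> eval A h (fst \<sigma>) = eval A h (snd \<sigma>))"

definition in_Mod :: "('f \<Rightarrow> nat) \<Rightarrow> ('f,'v) ident set \<Rightarrow> ('a,'f) alg \<Rightarrow> bool" where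
  "in_Mod ar \<Sigma> A \<longleftrightarrow> is_alg ar A \<and> (\<forall>\<sigma>\<in>\<Sigma>. satisfies A \<sigma>)"

text \<open>Testing on algebras whose elements are sets of terms over nat suffices, since the
  free V-algebra over countably many generators is of this form.\<close>
definition IdV :: "('f \<Rightarrow> nat) \<Rightarrow> ('f,nat) ident set \<Rightarrow> ('f,nat) ident set" where
  "IdV ar E = {(u,v). wf_trm ar u \<and> wf_trm ar v \<and>
     (\<forall>A :: (('f,nat) trm set, 'f) alg. in_Mod ar E A \<longrightarrow> satisfies A (u,v))}"

definition Tm :: "('f \<Rightarrow> nat) \<Rightarrow> nat \<Rightarrow> ('f,nat) trm set" where
  "Tm ar m = {t. wf_trm ar t \<and> vars t = {..<m}}"

definition prolong :: "('f \<Rightarrow> nat) \<Rightarrow> ('f,nat) ident set \<Rightarrow> ('f,nat) ident set" where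
  "prolong ar \<Sigma> = {(subst s u, subst s v) | u v s m. (u,v) \<in> \<Sigma> \<and> m \<ge> 1 \<and>
      (\<forall>y\<in>vars u \<union> vars v. s y \<in> Tm ar m)}"

definition termalg :: "('f \<Rightarrow> nat) \<Rightarrow> 'x set \<Rightarrow> (('f,'x) trm, 'f) alg" where
  "termalg ar X = ({t. wf_trm ar t \<and> vars t \<subseteq> X}, Fun)"

definition quot :: "('a,'f) alg \<Rightarrow> ('a \<times> 'a) set \<Rightarrow> ('a set,'f) alg" where
  "quot A \<theta> = (fst A // \<theta>, \<lambda>f cs. \<theta> `` {snd A f (map (\<lambda>c. SOME a. a \<in> c) cs)})"

definition is_cong :: "('f \<Rightarrow> nat) \<Rightarrow> ('a,'f) alg \<Rightarrow> ('a \<times> 'a) set \<Rightarrow> bool" where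
  "is_cong ar A \<theta> \<longleftrightarrow> equiv (fst A) \<theta> \<and>
     (\<forall>f as bs. length as = ar f \<longrightarrow> list_all2 (\<lambda>a b. (a,b) \<in> \<theta>) as bs \<longrightarrow>
        (snd A f as, snd A f bs) \<in> \<theta>)"

text \<open>Kernel of the canonical map from terms over X onto the free Mod(Sigma)-algebra.\<close>
definition freecong :: "('f \<Rightarrow> nat) \<Rightarrow> ('f,nat) ident set \<Rightarrow> 'x set \<Rightarrow> (('f,'x) trm \<times> ('f,'x) trm) set" where
  "freecong ar \<Sigma> X = {(u,v). u \<in> fst (termalg ar X) \<and> v \<in> fst (termalg ar X) \<and>
     (\<forall>A :: (('f,'x) trm set, 'f) alg. in_Mod ar \<Sigma> A \<longrightarrow>
        (\<forall>h. h ` X \<subseteq> fst A \<longrightarrow> eval A h u = eval A h v))}"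

definition free_alg :: "('f \<Rightarrow> nat) \<Rightarrow> ('f,nat) ident set \<Rightarrow> 'x set \<Rightarrow> (('f,'x) trm set, 'f) alg" where
  "free_alg ar \<Sigma> X = quot (termalg ar X) (freecong ar \<Sigma> X)"

definition regular_ids :: "('f \<Rightarrow> nat) \<Rightarrow> ('f,nat) ident set" where
  "regular_ids ar = {(u,v). wf_trm ar u \<and> wf_trm ar v \<and> vars u = vars v}"

definition in_S :: "('f \<Rightarrow> nat) \<Rightarrow> ('a,'f) alg \<Rightarrow> bool" where
  "in_S ar A \<longleftrightarrow> in_Mod ar (regular_ids ar) A"

definition sl_replica :: "('f \<Rightarrow> nat) \<Rightarrow> ('a,'f) alg \<Rightarrow> ('a \<times> 'a) set \<Rightarrow> bool" where
  "sl_replica ar A \<rho> \<longleftrightarrow> is_cong ar A \<rho> \<and> in_S ar (quot A \<rho>) \<and>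
     (\<forall>\<theta>. is_cong ar A \<theta> \<and> in_S ar (quot A \<theta>) \<longrightarrow> \<rho> \<subseteq> \<theta>)"

definition cong_join :: "('f \<Rightarrow> nat) \<Rightarrow> ('a,'f) alg \<Rightarrow> ('a \<times> 'a) set \<Rightarrow> ('a \<times> 'a) set \<Rightarrow> ('a \<times> 'a) set" where
  "cong_join ar A \<theta>1 \<theta>2 = \<Inter>{\<theta>. is_cong ar A \<theta> \<and> \<theta>1 \<union> \<theta>2 \<subseteq> \<theta>}"

text \<open>psi/delta for delta contained in psi.\<close>
definition cong_quot :: "('a \<times> 'a) set \<Rightarrow> ('a \<times> 'a) set \<Rightarrow> ('a set \<times> 'a set) set" where
  "cong_quot \<psi> \<delta> = {(\<delta> `` {a}, \<delta> `` {b}) | a b. (a,b) \<in> \<psi>}"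

definition subalg :: "('a,'f) alg \<Rightarrow> 'a set \<Rightarrow> ('a,'f) alg" where
  "subalg A c = (c, snd A)"

definition in_VS :: "('f \<Rightarrow> nat) \<Rightarrow> ('f,nat) ident set \<Rightarrow> ('a,'f) alg \<Rightarrow> bool" where
  "in_VS ar E A \<longleftrightarrow> (\<exists>\<theta>. is_cong ar A \<theta> \<and> in_S ar (quot A \<theta>) \<and>
     (\<forall>c\<in>fst A // \<theta>. in_Mod ar E (subalg A c)))"

end

theory Submission
  imports Defs
begin

text \<open>In an algebra of \<open>\<V>\<^sub>t\<^sup>p\<close> the prolonged identity \<open>t(x,y) = x\<close> gives
  \<open>t(r,s) = r\<close> for any two terms \<open>r, s\<close> in the same variables. Hence the relation
  \<open>a \<rho> b \<longleftrightarrow> t(a,b) = a \<and> t(b,a) = b\<close> is a congruence, and the quotient by it is a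
  semilattice, since a regular identity \<open>u = v\<close> yields \<open>u \<rho> v\<close>. It is the least such
  congruence, because \<open>t(x,y) = t(y,x)\<close> is regular. On a \<open>\<rho>\<close>-class every identity of \<open>\<V>\<^sub>t\<close>
  holds: substituting \<open>t(\<dots>t(t(y,x\<^sub>0),x\<^sub>1)\<dots>,x\<^sub>m\<^sub>-\<^sub>1)\<close> for each variable \<open>y\<close> makes all
  variables occur, so the prolonged identity applies, and inside a class this term evaluates
  to \<open>y\<close>. Since \<open>\<V>\<^sub>t\<^sup>p\<close> is closed under quotients, all of this applies to \<open>B/\<delta>\<close>, and the
  preimage of its replica congruence is \<open>\<delta> \<or> \<rho>\<^sub>B\<close> because \<open>a \<delta> t(a,b) \<rho>\<^sub>B t(b,a) \<delta> b\<close>.\<close>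

lemma eval_subst: "eval A h (subst s u) = eval A (\<lambda>y. eval A h (s y)) u"
  by (induction u) (auto intro!: map_cong arg_cong[where f="snd A _"])

lemma vars_subst: "vars (subst s u) = (\<Union>y\<in>vars u. vars (s y))"
  by (induction u) auto

lemma wf_trm_subst: "wf_trm ar u \<Longrightarrow> (\<And>y. y \<in> vars u \<Longrightarrow> wf_trm ar (s y)) \<Longrightarrow> wf_trm ar (subst s u)"
  by (induction u) auto

lemma eval_cong: "(\<And>y. y \<in> vars u \<Longrightarrow> h y = h' y) \<Longrightarrow> eval A h u = eval A h' u"
  by (induction u) (auto intro!: map_cong arg_cong[where f="snd A _"])

lemma eval_subalg: "eval (subalg A c) h u = eval A h u"
  by (induction u) (auto simp: subalg_def intro!: map_cong arg_cong[where f="snd A _"])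

lemma eval_termalg: "eval (termalg ar X) g u = subst g u"
  by (induction u) (auto simp: termalg_def)

lemma is_algD: "is_alg ar A \<Longrightarrow> length as = ar f \<Longrightarrow> set as \<subseteq> fst A \<Longrightarrow> snd A f as \<in> fst A"
  unfolding is_alg_def by blast

lemma eval_closed:
  "is_alg ar A \<Longrightarrow> wf_trm ar u \<Longrightarrow> (\<And>y. y \<in> vars u \<Longrightarrow> h y \<in> fst A) \<Longrightarrow> eval A h u \<in> fst A"
proof (induction u)
  case (Fun f ts)
  have "eval A h s \<in> fst A" if "s \<in> set ts" for s
    by (rule Fun.IH[OF that]) (use Fun.prems that in auto)
  with Fun.prems show ?case by (auto intro!: is_algD)
qed simp

lemma finite_vars: "finite (vars u)"
  by (induction u) auto

lemma vars_nonempty: "(\<And>f. ar f \<ge> 1) \<Longrightarrow> wf_trm ar u \<Longrightarrow> vars u \<noteq> {}"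
proof (induction u)
  case (Fun f ts)
  then obtain s where "s \<in> set ts"
    by (metis length_0_conv list.set_intros(1) neq_Nil_conv not_one_le_zero wf_trm.simps(2))
  with Fun show ?case by auto
qed simp

lemma Tm_2_vars: "t \<in> Tm ar 2 \<Longrightarrow> vars t = {0, 1}"
  by (simp add: Tm_def lessThan_Suc numeral_2_eq_2 insert_commute)

lemma Tm_wf: "t \<in> Tm ar m \<Longrightarrow> wf_trm ar t"
  by (simp add: Tm_def)

section \<open>Quotient algebras\<close>

lemma is_cong_equiv: "is_cong ar A \<theta> \<Longrightarrow> equiv (fst A) \<theta>"
  by (simp add: is_cong_def)

lemma quot_class_rep:
  assumes "equiv C \<theta>" "c \<in> C // \<theta>"
  shows "(SOME x. x \<in> c) \<in> C" "\<theta> `` {SOME x. x \<in> c} = c"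
proof -
  obtain a where a: "a \<in> C" "c = \<theta> `` {a}" using assms(2) by (rule quotientE)
  have "a \<in> c" using a equiv_class_self[OF assms(1) a(1)] by simp
  then have "(SOME x. x \<in> c) \<in> c" by (rule someI)
  then have r: "(a, SOME x. x \<in> c) \<in> \<theta>" using a by simp
  then show "(SOME x. x \<in> c) \<in> C" using equiv_type[OF assms(1)] by blast
  show "\<theta> `` {SOME x. x \<in> c} = c" using a(2) equiv_class_eq[OF assms(1) r] by simp
qed

lemma quot_op_classes:
  assumes "is_cong ar A \<theta>" "length as = ar f" "set as \<subseteq> fst A"
  shows "snd (quot A \<theta>) f (map (\<lambda>a. \<theta> `` {a}) as) = \<theta> `` {snd A f as}"
proof -
  have eq: "equiv (fst A) \<theta>" using assms(1) by (rule is_cong_equiv)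
  have rep: "(SOME x. x \<in> \<theta> `` {a}, a) \<in> \<theta>" if "a \<in> fst A" for a
    using quot_class_rep[OF eq quotientI[OF that]] eq_equiv_class_iff[OF eq] that by metis
  have "list_all2 (\<lambda>a b. (a,b) \<in> \<theta>) (map (\<lambda>a. SOME x. x \<in> \<theta> `` {a}) as) as"
    using assms(3) by (auto simp: list_all2_conv_all_nth simp del: Image_singleton_iff intro!: rep)
  then have "(snd A f (map (\<lambda>a. SOME x. x \<in> \<theta> `` {a}) as), snd A f as) \<in> \<theta>"
    using assms(1,2) unfolding is_cong_def by simp
  then show ?thesis by (simp add: quot_def comp_def equiv_class_eq[OF eq])
qed

lemma eval_quot:
  assumes "is_cong ar A \<theta>" "is_alg ar A" "wf_trm ar u" "\<forall>y. h y \<in> fst A"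
  shows "eval (quot A \<theta>) (\<lambda>y. \<theta> `` {h y}) u = \<theta> `` {eval A h u}"
  using assms(3)
proof (induction u)
  case (Fun f ts)
  have "map (eval (quot A \<theta>) (\<lambda>y. \<theta> `` {h y})) ts = map (\<lambda>a. \<theta> `` {a}) (map (eval A h) ts)"
    using Fun by auto
  moreover have "snd (quot A \<theta>) f (map (\<lambda>a. \<theta> `` {a}) (map (eval A h) ts))
      = \<theta> `` {snd A f (map (eval A h) ts)}"
    by (rule quot_op_classes[OF assms(1)]) (use Fun assms in \<open>auto intro!: eval_closed\<close>)
  ultimately show ?case by (simp del: map_map)
qed simp

lemma quot_is_alg:
  assumes "is_alg ar A" "equiv (fst A) \<theta>"
  shows "is_alg ar (quot A \<theta>)"
  unfolding is_alg_def
proof (intro allI impI)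
  fix f cs assume cs: "length cs = ar f \<and> set cs \<subseteq> fst (quot A \<theta>)"
  have "snd A f (map (\<lambda>c. SOME a. a \<in> c) cs) \<in> fst A"
    by (rule is_algD[OF assms(1)]) (use cs quot_class_rep[OF assms(2)] in \<open>auto simp: quot_def\<close>)
  then show "snd (quot A \<theta>) f cs \<in> fst (quot A \<theta>)"
    by (simp add: quot_def quotientI)
qed

lemma quot_assignment:
  assumes "equiv (fst A) \<theta>" "\<forall>x. h x \<in> fst (quot A \<theta>)"
  obtains g where "\<forall>y. g y \<in> fst A" "h = (\<lambda>y. \<theta> `` {g y})"
  using assms quot_class_rep[OF assms(1)]
  by (intro that[of "\<lambda>y. SOME a. a \<in> h y"]) (auto simp: quot_def fun_eq_iff)

lemma satisfies_quotI:
  fixes A :: "('a,'f) alg" and u v :: "('f,'v) trm"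
  assumes "is_cong ar A \<theta>" "is_alg ar A" "wf_trm ar u" "wf_trm ar v"
    and "\<And>g. \<forall>y. g y \<in> fst A \<Longrightarrow> (eval A g u, eval A g v) \<in> \<theta>"
  shows "satisfies (quot A \<theta>) (u, v)"
  unfolding satisfies_def
proof (intro allI impI)
  fix h :: "'v \<Rightarrow> 'a set" assume "\<forall>x. h x \<in> fst (quot A \<theta>)"
  then obtain g where g: "\<forall>y. g y \<in> fst A" and h: "h = (\<lambda>y. \<theta> `` {g y})"
    using quot_assignment is_cong_equiv[OF assms(1)] by metis
  have "\<theta> `` {eval A g u} = \<theta> `` {eval A g v}"
    using assms(5)[OF g] by (rule equiv_class_eq[OF is_cong_equiv[OF assms(1)]])
  then show "eval (quot A \<theta>) h (fst (u, v)) = eval (quot A \<theta>) h (snd (u, v))"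
    unfolding h using eval_quot[OF assms(1,2) _ g] assms(3,4) by simp
qed

lemma satisfies_quot:
  fixes A :: "('a,'f) alg" and u v :: "('f,'v) trm"
  assumes "is_alg ar A" "is_cong ar A \<theta>" "wf_trm ar u" "wf_trm ar v" "satisfies A (u, v)"
  shows "satisfies (quot A \<theta>) (u, v)"
proof (rule satisfies_quotI[OF assms(2,1,3,4)])
  fix g :: "'v \<Rightarrow> 'a" assume g: "\<forall>y. g y \<in> fst A"
  have "eval A g u \<in> fst A" by (rule eval_closed[OF assms(1,3)]) (use g in simp)
  moreover have "eval A g u = eval A g v" using assms(5) g by (simp add: satisfies_def)
  ultimately show "(eval A g u, eval A g v) \<in> \<theta>"
    using is_cong_equiv[OF assms(2)] by (auto simp: equiv_def refl_on_def)
qed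

definition cong_preimage ::
    "('a,'f) alg \<Rightarrow> ('a \<times> 'a) set \<Rightarrow> ('a set \<times> 'a set) set \<Rightarrow> ('a \<times> 'a) set" where
  "cong_preimage A \<delta> \<theta> = {(a,b). a \<in> fst A \<and> b \<in> fst A \<and> (\<delta> `` {a}, \<delta> `` {b}) \<in> \<theta>}"

lemma is_cong_cong_preimage:
  assumes \<delta>: "is_cong ar A \<delta>" and \<theta>: "is_cong ar (quot A \<delta>) \<theta>" and alg: "is_alg ar A"
  shows "is_cong ar A (cong_preimage A \<delta> \<theta>)"
  unfolding is_cong_def
proof (intro conjI allI impI)
  have eq: "refl_on (fst A // \<delta>) \<theta>" "sym \<theta>" "trans \<theta>"
    using is_cong_equiv[OF \<theta>] by (simp_all add: quot_def equiv_def)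
  show "equiv (fst A) (cong_preimage A \<delta> \<theta>)"
  proof (rule equivI)
    show "cong_preimage A \<delta> \<theta> \<subseteq> fst A \<times> fst A" by (auto simp: cong_preimage_def)
    show "refl_on (fst A) (cong_preimage A \<delta> \<theta>)"
      using eq(1) by (auto simp: cong_preimage_def refl_on_def quotientI)
    show "sym (cong_preimage A \<delta> \<theta>)"
      using eq(2) by (auto simp: cong_preimage_def intro!: symI dest: symD)
    show "trans (cong_preimage A \<delta> \<theta>)"
      using eq(3) by (auto simp: cong_preimage_def intro!: transI dest: transD)
  qed
next
  fix f as bs
  assume l: "length as = ar f" and rel: "list_all2 (\<lambda>a b. (a, b) \<in> cong_preimage A \<delta> \<theta>) as bs"
  then have lb: "length bs = ar f" and A: "set as \<subseteq> fst A" "set bs \<subseteq> fst A"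
    by (auto simp: list_all2_conv_all_nth set_conv_nth cong_preimage_def)
  have "list_all2 (\<lambda>a b. (a, b) \<in> \<theta>) (map (\<lambda>a. \<delta> `` {a}) as) (map (\<lambda>a. \<delta> `` {a}) bs)"
    using rel by (auto simp: list_all2_conv_all_nth cong_preimage_def)
  then have "(snd (quot A \<delta>) f (map (\<lambda>a. \<delta> `` {a}) as),
      snd (quot A \<delta>) f (map (\<lambda>a. \<delta> `` {a}) bs)) \<in> \<theta>"
    using \<theta> l unfolding is_cong_def by simp
  then show "(snd A f as, snd A f bs) \<in> cong_preimage A \<delta> \<theta>"
    using quot_op_classes[OF \<delta> l A(1)] quot_op_classes[OF \<delta> lb A(2)] is_algD[OF alg] l lb A
    by (simp add: cong_preimage_def)
qed

lemma cong_subset_cong_preimage: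
  assumes \<delta>: "equiv (fst A) \<delta>" and \<theta>: "equiv (fst (quot A \<delta>)) \<theta>"
  shows "\<delta> \<subseteq> cong_preimage A \<delta> \<theta>"
proof (rule subrelI)
  fix a b assume "(a,b) \<in> \<delta>"
  then have "a \<in> fst A" "b \<in> fst A" "\<delta> `` {a} = \<delta> `` {b}"
    using equiv_type[OF \<delta>] equiv_class_eq[OF \<delta>] by auto
  moreover have "(\<delta> `` {a}, \<delta> `` {a}) \<in> \<theta>"
    using \<theta> quotientI[OF \<open>a \<in> fst A\<close>, of \<delta>] by (simp add: quot_def equiv_def refl_on_def)
  ultimately show "(a,b) \<in> cong_preimage A \<delta> \<theta>" by (simp add: cong_preimage_def)
qed

lemma cong_quot_cong_preimage:
  assumes "\<theta> \<subseteq> fst (quot A \<delta>) \<times> fst (quot A \<delta>)"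
  shows "cong_quot (cong_preimage A \<delta> \<theta>) \<delta> = \<theta>"
  using assms by (fastforce simp: cong_quot_def cong_preimage_def quot_def elim!: quotientE)

lemma sl_replica_unique: "sl_replica ar A \<rho> \<Longrightarrow> sl_replica ar A \<rho>' \<Longrightarrow> \<rho> = \<rho>'"
  unfolding sl_replica_def by blast

lemma termalg_is_alg: "is_alg ar (termalg ar X)"
  unfolding is_alg_def termalg_def by auto

lemma freecong_is_cong: "is_cong ar (termalg ar X) (freecong ar \<Sigma> X)"
  unfolding is_cong_def
proof (intro conjI allI impI)
  show "equiv (fst (termalg ar X)) (freecong ar \<Sigma> X)"
    by (rule equivI) (auto simp: freecong_def refl_on_def sym_def trans_def)
next
  fix f as bs
  assume l: "length as = ar f" and rel: "list_all2 (\<lambda>a b. (a, b) \<in> freecong ar \<Sigma> X) as bs"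
  then have "length bs = ar f" "set as \<subseteq> fst (termalg ar X)" "set bs \<subseteq> fst (termalg ar X)"
    by (auto simp: list_all2_conv_all_nth set_conv_nth freecong_def)
  moreover have "map (eval A h) as = map (eval A h) bs"
    if "in_Mod ar \<Sigma> A" "h ` X \<subseteq> fst A" for A :: "(('a, 'b) trm set, 'a) alg" and h
  proof (rule nth_equalityI)
    show "length (map (eval A h) as) = length (map (eval A h) bs)"
      using rel by (simp add: list_all2_lengthD)
    fix i assume "i < length (map (eval A h) as)"
    then have "(as ! i, bs ! i) \<in> freecong ar \<Sigma> X" using rel by (simp add: list_all2_conv_all_nth)
    then have "eval A h (as ! i) = eval A h (bs ! i)"
      using that unfolding freecong_def by blast
    with \<open>i < _\<close> rel show "map (eval A h) as ! i = map (eval A h) bs ! i"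
      by (simp add: list_all2_lengthD)
  qed
  ultimately show "(snd (termalg ar X) f as, snd (termalg ar X) f bs) \<in> freecong ar \<Sigma> X"
    using l by (auto simp: freecong_def termalg_def)
qed

lemma free_alg_is_alg: "is_alg ar (free_alg ar \<Sigma> X)"
  unfolding free_alg_def
  by (rule quot_is_alg[OF termalg_is_alg is_cong_equiv[OF freecong_is_cong]])

lemma free_alg_satisfies:
  fixes \<Sigma> :: "('f,nat) ident set" and X :: "'x set"
  assumes wf: "wf_trm ar u" "wf_trm ar v" and uv: "(u,v) \<in> \<Sigma>"
  shows "satisfies (free_alg ar \<Sigma> X) (u,v)"
  unfolding free_alg_def
proof (rule satisfies_quotI[OF freecong_is_cong termalg_is_alg wf])
  fix g :: "nat \<Rightarrow> ('f,'x) trm" assume g: "\<forall>y. g y \<in> fst (termalg ar X)"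
  have "subst g u \<in> fst (termalg ar X)" "subst g v \<in> fst (termalg ar X)"
    using g wf by (auto simp: termalg_def vars_subst intro!: wf_trm_subst)
  moreover have "eval A h (subst g u) = eval A h (subst g v)"
    if A: "in_Mod ar \<Sigma> A" "h ` X \<subseteq> fst A" for A :: "(('f, 'x) trm set, 'f) alg" and h
  proof -
    have "\<forall>y. eval A h (g y) \<in> fst A"
      using g A by (auto simp: termalg_def in_Mod_def intro!: eval_closed)
    then show ?thesis
      using A uv by (fastforce simp: eval_subst in_Mod_def satisfies_def)
  qed
  ultimately show "(eval (termalg ar X) g u, eval (termalg ar X) g v) \<in> freecong ar \<Sigma> X"
    by (simp add: eval_termalg freecong_def)
qed

lemma prolong_IdV_wf: "(u,v) \<in> prolong ar (IdV ar E) \<Longrightarrow> wf_trm ar u \<and> wf_trm ar v"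
  unfolding prolong_def IdV_def Tm_def by (auto intro!: wf_trm_subst)

section \<open>The operation \<open>t\<close> and its absorption congruence\<close>

definition t_op :: "('a,'f) alg \<Rightarrow> ('f,nat) trm \<Rightarrow> 'a \<Rightarrow> 'a \<Rightarrow> 'a" where
  "t_op A t a b = eval A (\<lambda>y. if y = 0 then a else b) t"

definition t_rel :: "('a,'f) alg \<Rightarrow> ('f,nat) trm \<Rightarrow> ('a \<times> 'a) set" where
  "t_rel A t = {(a,b). a \<in> fst A \<and> b \<in> fst A \<and> t_op A t a b = a \<and> t_op A t b a = b}"

definition t_trm :: "('f,nat) trm \<Rightarrow> ('f,'v) trm \<Rightarrow> ('f,'v) trm \<Rightarrow> ('f,'v) trm" where
  "t_trm t r s = subst (\<lambda>y. if y = 0 then r else s) t"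

lemma vars_t_trm: "t \<in> Tm ar 2 \<Longrightarrow> vars (t_trm t r s) = vars r \<union> vars s"
  by (simp add: t_trm_def vars_subst Tm_2_vars)

lemma wf_trm_t_trm: "t \<in> Tm ar 2 \<Longrightarrow> wf_trm ar r \<Longrightarrow> wf_trm ar s \<Longrightarrow> wf_trm ar (t_trm t r s)"
  unfolding t_trm_def by (rule wf_trm_subst[OF Tm_wf]) auto

lemma eval_t_trm: "eval A h (t_trm t r s) = t_op A t (eval A h r) (eval A h s)"
  unfolding t_trm_def t_op_def eval_subst by (rule eval_cong) auto

lemma t_op_closed: "is_alg ar A \<Longrightarrow> t \<in> Tm ar 2 \<Longrightarrow> a \<in> fst A \<Longrightarrow> b \<in> fst A \<Longrightarrow> t_op A t a b \<in> fst A"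
  unfolding t_op_def by (rule eval_closed[OF _ Tm_wf]) auto

lemma t_op_quot:
  assumes "is_cong ar A \<delta>" "is_alg ar A" "t \<in> Tm ar 2" "a \<in> fst A" "b \<in> fst A"
  shows "t_op (quot A \<delta>) t (\<delta> `` {a}) (\<delta> `` {b}) = \<delta> `` {t_op A t a b}"
proof -
  have "t_op (quot A \<delta>) t (\<delta> `` {a}) (\<delta> `` {b})
      = eval (quot A \<delta>) (\<lambda>y. \<delta> `` {if y = 0 then a else b}) t"
    unfolding t_op_def by (rule arg_cong[where f="\<lambda>h. eval _ h t"]) (rule ext, simp)
  also have "\<dots> = \<delta> `` {t_op A t a b}"
    unfolding t_op_def
    by (rule eval_quot[OF assms(1,2)]) (use Tm_wf[OF assms(3)] assms(4,5) in auto)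
  finally show ?thesis .
qed

lemma t_rel_subset_cong:
  assumes alg: "is_alg ar A" and t: "t \<in> Tm ar 2"
    and \<theta>: "is_cong ar A \<theta>" "in_S ar (quot A \<theta>)"
  shows "t_rel A t \<subseteq> \<theta>"
proof (rule subrelI)
  fix a b assume "(a,b) \<in> t_rel A t"
  then have ab: "a \<in> fst A" "b \<in> fst A" "t_op A t a b = a" "t_op A t b a = b"
    by (auto simp: t_rel_def)
  define g where "g = (\<lambda>y::nat. if y = 0 then a else b)"
  have g: "\<forall>y. g y \<in> fst A" using ab by (simp add: g_def)
  define t' where "t' = t_trm t (Var (1::nat)) (Var 0)"
  have wf: "wf_trm ar t" "wf_trm ar t'" and "vars t = vars t'"
    using t
    by (simp_all add: t'_def Tm_wf wf_trm_t_trm[OF t] vars_t_trm[OF t] Tm_2_vars insert_commute)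
  then have "satisfies (quot A \<theta>) (t, t')"
    using \<theta>(2) by (auto simp: in_S_def in_Mod_def regular_ids_def)
  moreover have "\<forall>y. \<theta> `` {g y} \<in> fst (quot A \<theta>)" using g by (simp add: quot_def quotientI)
  ultimately have "eval (quot A \<theta>) (\<lambda>y. \<theta> `` {g y}) t = eval (quot A \<theta>) (\<lambda>y. \<theta> `` {g y}) t'"
    unfolding satisfies_def by auto
  moreover have "eval A g t = a" using ab(3) by (simp add: g_def t_op_def)
  moreover have "eval A g t' = b" using ab(4) by (simp add: g_def t'_def eval_t_trm)
  ultimately have "\<theta> `` {a} = \<theta> `` {b}" using eval_quot[OF \<theta>(1) alg _ g] wf by simp
  then show "(a,b) \<in> \<theta>" using eq_equiv_class_iff[OF is_cong_equiv[OF \<theta>(1)] ab(1,2)] by simp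
qed

primrec t_chain :: "('f,nat) trm \<Rightarrow> nat \<Rightarrow> nat \<Rightarrow> ('f,nat) trm" where
  "t_chain t y 0 = Var y"
| "t_chain t y (Suc k) = t_trm t (t_chain t y k) (Var k)"

lemma vars_t_chain:
  assumes "t \<in> Tm ar 2"
  shows "vars (t_chain t y k) = insert y {..<k}"
  by (induction k) (auto simp: vars_t_trm[OF assms] lessThan_Suc)

lemma wf_trm_t_chain:
  assumes "t \<in> Tm ar 2"
  shows "wf_trm ar (t_chain t y k)"
  by (induction k) (simp_all add: wf_trm_t_trm[OF assms])

lemma eval_t_chain: "(\<And>y z. t_op A t (h y) (h z) = h y) \<Longrightarrow> eval A h (t_chain t y k) = h y"
  by (induction k) (auto simp: eval_t_trm)

section \<open>Algebras of the prolongation \<open>\<V>\<^sub>t\<^sup>p\<close>\<close>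

locale prolonged_alg =
  fixes ar :: "'f \<Rightarrow> nat" and E :: "('f,nat) ident set" and t :: "('f,nat) trm"
    and A :: "('a,'f) alg"
  assumes plural: "plural ar"
    and E_wf: "\<forall>(u,v)\<in>E. wf_trm ar u \<and> wf_trm ar v"
    and t_Tm: "t \<in> Tm ar 2"
    and t_IdV: "(t, Var 0) \<in> IdV ar E"
    and alg: "is_alg ar A"
    and satisfies_prolong: "\<forall>\<sigma>\<in>prolong ar (IdV ar E). satisfies A \<sigma>"
begin

lemma arity_pos: "ar f \<ge> 1"
  using plural by (simp add: plural_def)

lemma E_subset_IdV: "E \<subseteq> IdV ar E"
  using E_wf unfolding IdV_def in_Mod_def by auto

text \<open>Prolongation only substitutes terms of \<open>T\<^sub>m\<close>; renaming the common variable set \<open>W\<close>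
  bijectively onto \<open>{0..<m}\<close> reduces to that case.\<close>

lemma eval_IdV_subst_eq:
  assumes uv: "(u,v) \<in> IdV ar E" and W: "finite W" "W \<noteq> {}"
    and s: "\<And>y. y \<in> vars u \<union> vars v \<Longrightarrow> wf_trm ar (s y) \<and> vars (s y) = W"
    and h: "\<forall>x. h x \<in> fst A"
  shows "eval A h (subst s u) = eval A h (subst s v)"
proof -
  define m where "m = card W"
  obtain \<pi> where \<pi>: "bij_betw \<pi> {..<m} W"
    using ex_bij_betw_nat_finite[OF W(1)] by (auto simp: m_def atLeast0LessThan)
  define \<pi>' where "\<pi>' = inv_into {..<m} \<pi>"
  have \<pi>': "bij_betw \<pi>' W {..<m}" unfolding \<pi>'_def by (rule bij_betw_inv_into[OF \<pi>])
  have \<pi>\<pi>': "\<pi> (\<pi>' z) = z" if "z \<in> W" for z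
    unfolding \<pi>'_def using \<pi> that by (simp add: bij_betw_inv_into_right)
  define s' where "s' y = subst (\<lambda>z. Var (\<pi>' z)) (s y)" for y
  have "s' y \<in> Tm ar m" if "y \<in> vars u \<union> vars v" for y
    using s[OF that] \<pi>' by (auto simp: Tm_def s'_def vars_subst bij_betw_def intro!: wf_trm_subst)
  moreover have "m \<ge> 1" using W by (simp add: m_def Suc_le_eq card_gt_0_iff)
  ultimately have "(subst s' u, subst s' v) \<in> prolong ar (IdV ar E)"
    unfolding prolong_def using uv by blast
  then have "eval A (h \<circ> \<pi>) (subst s' u) = eval A (h \<circ> \<pi>) (subst s' v)"
    using satisfies_prolong h by (auto simp: satisfies_def)
  moreover have "eval A (h \<circ> \<pi>) (subst s' w) = eval A h (subst s w)"
    if w: "vars w \<subseteq> vars u \<union> vars v" for w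
  proof -
    have \<pi>_cancel: "eval A (\<lambda>z. h (\<pi> (\<pi>' z))) (s y) = eval A h (s y)" if "y \<in> vars w" for y
      by (rule eval_cong) (use s \<pi>\<pi>' that w in auto)
    show ?thesis
      unfolding eval_subst s'_def comp_def by (rule eval_cong) (simp add: \<pi>_cancel)
  qed
  ultimately show ?thesis by simp
qed

lemma t_op_absorb:
  assumes "wf_trm ar r" "wf_trm ar s" "vars r = vars s" "\<forall>x. h x \<in> fst A"
  shows "t_op A t (eval A h r) (eval A h s) = eval A h r"
proof -
  have "eval A h (t_trm t r s) = eval A h (subst (\<lambda>y. if y = 0 then r else s) (Var (0::nat)))"
    unfolding t_trm_def
  proof (rule eval_IdV_subst_eq[OF t_IdV])
    show "finite (vars r)" "vars r \<noteq> {}"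
      using finite_vars vars_nonempty[OF arity_pos assms(1)] by blast+
    show "\<And>y. y \<in> vars t \<union> vars (Var 0) \<Longrightarrow>
        wf_trm ar (if y = 0 then r else s) \<and> vars (if y = 0 then r else s) = vars r"
      using assms(1-3) by simp
  qed (use assms(4) in simp)
  then show ?thesis by (simp add: eval_t_trm)
qed

lemma eval_in_t_rel:
  assumes "wf_trm ar r" "wf_trm ar s" "vars r = vars s" "\<forall>x. h x \<in> fst A"
  shows "(eval A h r, eval A h s) \<in> t_rel A t"
  using t_op_absorb[OF assms] t_op_absorb[OF assms(2,1) assms(3)[symmetric] assms(4)]
    eval_closed[OF alg assms(1)] eval_closed[OF alg assms(2)] assms(4)
  by (simp add: t_rel_def)

lemma t_op_idem: "a \<in> fst A \<Longrightarrow> t_op A t a a = a"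
  using t_op_absorb[of "Var 0" "Var 0" "\<lambda>_::nat. a"] by simp

lemma t_op_swap_in_t_rel:
  assumes "a \<in> fst A" "b \<in> fst A"
  shows "(t_op A t a b, t_op A t b a) \<in> t_rel A t"
proof -
  define h where "h = (\<lambda>y::nat. if y = 0 then a else b)"
  have "(eval A h (t_trm t (Var 0) (Var 1)), eval A h (t_trm t (Var 1) (Var 0))) \<in> t_rel A t"
    by (rule eval_in_t_rel)
      (use assms in \<open>auto simp: h_def wf_trm_t_trm[OF t_Tm] vars_t_trm[OF t_Tm]\<close>)
  then show ?thesis by (simp add: h_def eval_t_trm)
qed

lemma t_rel_trans:
  assumes "(a,b) \<in> t_rel A t" "(b,c) \<in> t_rel A t"
  shows "(a,c) \<in> t_rel A t"
proof -
  define h where "h = (\<lambda>y::nat. if y = 0 then a else if y = 1 then b else c)"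
  \<comment> \<open>same variables, and they evaluate to \<open>t(a,t(b,c)) = a\<close> and \<open>t(c,t(b,a)) = c\<close>\<close>
  define r where "r = t_trm t (Var (0::nat)) (t_trm t (Var 1) (Var 2))"
  define r' where "r' = t_trm t (Var (2::nat)) (t_trm t (Var 1) (Var 0))"
  have "(eval A h r, eval A h r') \<in> t_rel A t"
    by (rule eval_in_t_rel) (use assms in
        \<open>auto simp: r_def r'_def wf_trm_t_trm[OF t_Tm] vars_t_trm[OF t_Tm] h_def t_rel_def\<close>)
  moreover have "eval A h r = a" "eval A h r' = c"
    using assms by (simp_all add: r_def r'_def eval_t_trm h_def t_rel_def)
  ultimately show ?thesis by simp
qed

lemma t_op_ops_absorb:
  assumes l: "length as = ar f" and rel: "list_all2 (\<lambda>a b. (a,b) \<in> t_rel A t) as bs"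
  shows "t_op A t (snd A f as) (snd A f bs) = snd A f as"
proof -
  define k where "k = length as"
  have lb: "length bs = k" using rel k_def by (simp add: list_all2_lengthD)
  have ab: "as!i \<in> fst A \<and> bs!i \<in> fst A \<and>
      t_op A t (as!i) (bs!i) = as!i \<and> t_op A t (bs!i) (as!i) = bs!i" if "i < k" for i
    using rel that k_def by (auto simp: list_all2_conv_all_nth t_rel_def)
  define h where "h y = (if y < k then as!y else if y < 2*k then bs!(y-k) else as!0)" for y
  have h: "\<forall>x. h x \<in> fst A" using ab arity_pos[of f] l k_def by (auto simp: h_def)
  \<comment> \<open>\<open>r = f(t(x\<^sub>0,x\<^sub>k),\<dots>)\<close> evaluates to \<open>f(as)\<close> and \<open>r' = f(t(x\<^sub>k,x\<^sub>0),\<dots>)\<close> to \<open>f(bs)\<close>\<close>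
  define r where "r = Fun f (map (\<lambda>i. t_trm t (Var i) (Var (k+i))) [0..<k])"
  define r' where "r' = Fun f (map (\<lambda>i. t_trm t (Var (k+i)) (Var i)) [0..<k])"
  have "t_op A t (eval A h r) (eval A h r') = eval A h r"
    by (rule t_op_absorb[OF _ _ _ h])
      (use l k_def in \<open>auto simp: r_def r'_def wf_trm_t_trm[OF t_Tm] vars_t_trm[OF t_Tm]\<close>)
  moreover have "map (eval A h) (map (\<lambda>i. t_trm t (Var i) (Var (k+i))) [0..<k]) = as"
    by (rule nth_equalityI) (auto simp: eval_t_trm h_def ab k_def)
  moreover have "map (eval A h) (map (\<lambda>i. t_trm t (Var (k+i)) (Var i)) [0..<k]) = bs"
    by (rule nth_equalityI) (auto simp: eval_t_trm h_def ab lb)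
  ultimately show ?thesis by (simp add: r_def r'_def del: map_map)
qed

lemma t_rel_is_cong: "is_cong ar A (t_rel A t)"
  unfolding is_cong_def
proof (intro conjI allI impI)
  show "equiv (fst A) (t_rel A t)"
  proof (rule equivI)
    show "t_rel A t \<subseteq> fst A \<times> fst A" by (auto simp: t_rel_def)
    show "refl_on (fst A) (t_rel A t)" by (auto simp: refl_on_def t_rel_def t_op_idem)
    show "sym (t_rel A t)" by (auto simp: sym_def t_rel_def)
    show "trans (t_rel A t)" by (blast intro: transI t_rel_trans)
  qed
next
  fix f as bs assume l: "length as = ar f" and rel: "list_all2 (\<lambda>a b. (a, b) \<in> t_rel A t) as bs"
  have lb: "length bs = ar f" using rel l by (simp add: list_all2_lengthD)
  have rel': "list_all2 (\<lambda>a b. (a, b) \<in> t_rel A t) bs as"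
    using rel by (auto simp: list_all2_conv_all_nth t_rel_def)
  have "set as \<subseteq> fst A" "set bs \<subseteq> fst A"
    using rel by (auto simp: list_all2_conv_all_nth set_conv_nth t_rel_def)
  then show "(snd A f as, snd A f bs) \<in> t_rel A t"
    using t_op_ops_absorb[OF l rel] t_op_ops_absorb[OF lb rel'] is_algD[OF alg] l lb
    by (simp add: t_rel_def)
qed

lemma in_S_quot_t_rel: "in_S ar (quot A (t_rel A t))"
  unfolding in_S_def in_Mod_def
proof (intro conjI ballI)
  show "is_alg ar (quot A (t_rel A t))"
    by (rule quot_is_alg[OF alg is_cong_equiv[OF t_rel_is_cong]])
  fix \<sigma> assume "\<sigma> \<in> regular_ids ar"
  then obtain u v where uv: "\<sigma> = (u,v)" "wf_trm ar u" "wf_trm ar v" "vars u = vars v"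
    by (auto simp: regular_ids_def)
  show "satisfies (quot A (t_rel A t)) \<sigma>"
    unfolding uv(1) using satisfies_quotI[OF t_rel_is_cong alg uv(2,3) eval_in_t_rel[OF uv(2-4)]] .
qed

lemma sl_replica_t_rel: "sl_replica ar A (t_rel A t)"
  unfolding sl_replica_def
  using t_rel_is_cong in_S_quot_t_rel t_rel_subset_cong[OF alg t_Tm] by blast

lemma t_rel_class_closed:
  assumes c: "c \<in> fst A // t_rel A t"
  shows "is_alg ar (subalg A c)"
  unfolding is_alg_def subalg_def fst_conv snd_conv
proof (intro allI impI)
  fix f and as :: "'a list" assume as: "length as = ar f \<and> set as \<subseteq> c"
  have eq: "equiv (fst A) (t_rel A t)" by (rule is_cong_equiv[OF t_rel_is_cong])
  obtain a where a: "a \<in> fst A" "c = t_rel A t `` {a}" using c by (rule quotientE)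
  have in_c: "(x, y) \<in> t_rel A t" if "x \<in> c" "y \<in> c" for x y
    using quotient_eq_iff[OF eq c c] that by blast
  have "a \<in> c" using a equiv_class_self[OF eq] by simp
  then have "list_all2 (\<lambda>x y. (x,y) \<in> t_rel A t) as (replicate (ar f) a)"
    unfolding list_all2_conv_all_nth using as by (auto intro!: in_c)
  then have "(snd A f as, snd A f (replicate (ar f) a)) \<in> t_rel A t"
    using t_rel_is_cong as unfolding is_cong_def by blast
  moreover have "(snd A f (replicate (ar f) a), a) \<in> t_rel A t"
    using eval_in_t_rel[of "Fun f (replicate (ar f) (Var (0::nat)))" "Var 0" "\<lambda>_. a"] a(1)
      arity_pos[of f]
    by (simp add: map_replicate_const)
  moreover have "sym (t_rel A t)" "trans (t_rel A t)" using eq by (simp_all add: equiv_def)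
  ultimately have "(a, snd A f as) \<in> t_rel A t" by (meson symD transD)
  then show "snd A f as \<in> c" using a(2) by simp
qed

lemma t_rel_class_satisfies:
  assumes c: "c \<in> fst A // t_rel A t" and uv: "(u,v) \<in> E"
  shows "satisfies (subalg A c) (u,v)"
  unfolding satisfies_def fst_conv snd_conv
proof (intro allI impI)
  fix h :: "nat \<Rightarrow> 'a" assume "\<forall>x. h x \<in> fst (subalg A c)"
  then have hc: "\<forall>x. h x \<in> c" by (simp add: subalg_def)
  have eq: "equiv (fst A) (t_rel A t)" by (rule is_cong_equiv[OF t_rel_is_cong])
  have hA: "\<forall>x. h x \<in> fst A" using hc c by (auto elim!: quotientE simp: t_rel_def)
  have "(h y, h z) \<in> t_rel A t" for y z
    using quotient_eq_iff[OF eq c c] hc by blast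
  then have absorb: "t_op A t (h y) (h z) = h y" for y z by (simp add: t_rel_def)
  define m where "m = Suc (Max (vars u \<union> vars v))"
  have m: "y < m" if y: "y \<in> vars u \<union> vars v" for y
  proof -
    have "y \<le> Max (vars u \<union> vars v)" using Max_ge[OF _ y] by (simp add: finite_vars)
    then show ?thesis by (simp add: m_def)
  qed
  have "eval A h (subst (\<lambda>y. t_chain t y m) u) = eval A h (subst (\<lambda>y. t_chain t y m) v)"
  proof (rule eval_IdV_subst_eq[where W="{..<m}", OF E_subset_IdV[THEN subsetD, OF uv] _ _ _ hA])
    show "finite {..<m}" "{..<m} \<noteq> {}" by (auto simp: m_def)
    show "wf_trm ar (t_chain t y m) \<and> vars (t_chain t y m) = {..<m}"
      if "y \<in> vars u \<union> vars v" for y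
      using m[OF that] by (auto simp: wf_trm_t_chain[OF t_Tm] vars_t_chain[OF t_Tm])
  qed
  then have "eval A h u = eval A h v"
    by (simp add: eval_subst eval_t_chain[OF absorb])
  then show "eval (subalg A c) h u = eval (subalg A c) h v" by (simp add: eval_subalg)
qed

lemma t_rel_classes_in_Mod: "\<forall>c\<in>fst A // t_rel A t. in_Mod ar E (subalg A c)"
  using t_rel_class_closed t_rel_class_satisfies by (auto simp: in_Mod_def)

lemma in_VS: "in_VS ar E A"
  unfolding in_VS_def using t_rel_is_cong in_S_quot_t_rel t_rel_classes_in_Mod by blast

lemma prolonged_alg_quot:
  assumes "is_cong ar A \<delta>"
  shows "prolonged_alg ar E t (quot A \<delta>)"
proof (rule prolonged_alg.intro)
  show "\<forall>\<sigma>\<in>prolong ar (IdV ar E). satisfies (quot A \<delta>) \<sigma>"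
  proof
    fix \<sigma> assume "\<sigma> \<in> prolong ar (IdV ar E)"
    moreover obtain u v where "\<sigma> = (u,v)" by fastforce
    ultimately show "satisfies (quot A \<delta>) \<sigma>"
      using satisfies_quot[OF alg assms] satisfies_prolong prolong_IdV_wf by blast
  qed
qed (use plural E_wf t_Tm t_IdV quot_is_alg[OF alg is_cong_equiv[OF assms]] in auto)

lemma t_rel_subset_cong_preimage:
  assumes \<delta>: "is_cong ar A \<delta>"
  shows "t_rel A t \<subseteq> cong_preimage A \<delta> (t_rel (quot A \<delta>) t)"
proof (rule subrelI)
  fix a b assume "(a,b) \<in> t_rel A t"
  then have ab: "a \<in> fst A" "b \<in> fst A" "t_op A t a b = a" "t_op A t b a = b"
    by (auto simp: t_rel_def)
  moreover have "\<delta> `` {a} \<in> fst (quot A \<delta>)" "\<delta> `` {b} \<in> fst (quot A \<delta>)"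
    using ab by (simp_all add: quot_def quotientI)
  ultimately show "(a,b) \<in> cong_preimage A \<delta> (t_rel (quot A \<delta>) t)"
    by (simp add: cong_preimage_def t_rel_def t_op_quot[OF \<delta> alg t_Tm])
qed

text \<open>\<open>a \<delta> t(a,b) \<rho> t(b,a) \<delta> b\<close> whenever \<open>\<delta>a\<close> and \<open>\<delta>b\<close> are \<open>t\<close>-related in \<open>A/\<delta>\<close>.\<close>

lemma cong_preimage_subset_cong_join:
  assumes \<delta>: "is_cong ar A \<delta>"
  shows "cong_preimage A \<delta> (t_rel (quot A \<delta>) t) \<subseteq> cong_join ar A \<delta> (t_rel A t)"
proof (rule subrelI)
  fix a b assume "(a,b) \<in> cong_preimage A \<delta> (t_rel (quot A \<delta>) t)"
  then have ab: "a \<in> fst A" "b \<in> fst A" "(\<delta> `` {a}, \<delta> `` {b}) \<in> t_rel (quot A \<delta>) t"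
    by (auto simp: cong_preimage_def)
  then have "\<delta> `` {t_op A t a b} = \<delta> `` {a}" "\<delta> `` {t_op A t b a} = \<delta> `` {b}"
    by (auto simp: t_rel_def t_op_quot[OF \<delta> alg t_Tm])
  moreover have "t_op A t a b \<in> fst A" "t_op A t b a \<in> fst A"
    using t_op_closed[OF alg t_Tm] ab(1,2) by auto
  ultimately have chain: "(a, t_op A t a b) \<in> \<delta>" "(t_op A t a b, t_op A t b a) \<in> t_rel A t"
    "(t_op A t b a, b) \<in> \<delta>"
    using ab(1,2) t_op_swap_in_t_rel
    by (simp_all add: eq_equiv_class_iff[OF is_cong_equiv[OF \<delta>], symmetric])
  show "(a,b) \<in> cong_join ar A \<delta> (t_rel A t)"
    unfolding cong_join_def
  proof (rule InterI, clarify)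
    fix \<theta> assume \<theta>: "is_cong ar A \<theta>" "\<delta> \<union> t_rel A t \<subseteq> \<theta>"
    have "trans \<theta>" using is_cong_equiv[OF \<theta>(1)] by (simp add: equiv_def)
    with chain \<theta>(2) show "(a,b) \<in> \<theta>" by (meson UnCI subsetD transD)
  qed
qed

lemma cong_join_t_rel_eq_cong_preimage:
  assumes \<delta>: "is_cong ar A \<delta>"
  shows "cong_join ar A \<delta> (t_rel A t) = cong_preimage A \<delta> (t_rel (quot A \<delta>) t)"
proof (rule subset_antisym[OF _ cong_preimage_subset_cong_join[OF \<delta>]])
  interpret Q: prolonged_alg ar E t "quot A \<delta>" by (rule prolonged_alg_quot[OF \<delta>])
  have "\<delta> \<subseteq> cong_preimage A \<delta> (t_rel (quot A \<delta>) t)"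
    by (rule cong_subset_cong_preimage[OF is_cong_equiv[OF \<delta>] is_cong_equiv[OF Q.t_rel_is_cong]])
  then show "cong_join ar A \<delta> (t_rel A t) \<subseteq> cong_preimage A \<delta> (t_rel (quot A \<delta>) t)"
    using is_cong_cong_preimage[OF \<delta> Q.t_rel_is_cong alg] t_rel_subset_cong_preimage[OF \<delta>]
    unfolding cong_join_def by blast
qed

lemma cong_quot_join_t_rel:
  assumes "is_cong ar A \<delta>"
  shows "cong_quot (cong_join ar A \<delta> (t_rel A t)) \<delta> = t_rel (quot A \<delta>) t"
  unfolding cong_join_t_rel_eq_cong_preimage[OF assms]
  by (rule cong_quot_cong_preimage) (auto simp: t_rel_def)

end

lemma prolonged_alg_free_alg:
  assumes "plural ar" "\<forall>(u,v)\<in>E. wf_trm ar u \<and> wf_trm ar v" "t \<in> Tm ar 2" "(t, Var 0) \<in> IdV ar E"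
  shows "prolonged_alg ar E t (free_alg ar (prolong ar (IdV ar E)) X)"
proof (rule prolonged_alg.intro)
  show "\<forall>\<sigma>\<in>prolong ar (IdV ar E). satisfies (free_alg ar (prolong ar (IdV ar E)) X) \<sigma>"
  proof
    fix \<sigma> assume "\<sigma> \<in> prolong ar (IdV ar E)"
    moreover obtain u v where "\<sigma> = (u,v)" by fastforce
    ultimately show "satisfies (free_alg ar (prolong ar (IdV ar E)) X) \<sigma>"
      using free_alg_satisfies prolong_IdV_wf by blast
  qed
qed (simp_all add: assms free_alg_is_alg)

theorem proposition5p2:
  fixes ar :: "'f \<Rightarrow> nat" and E :: "('f,nat) ident set" and t :: "('f,nat) trm"
    and X :: "'x set" and B :: "(('f,'x) trm set, 'f) alg"
    and \<delta> \<rho> \<psi> :: "(('f,'x) trm set \<times> ('f,'x) trm set) set"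
  assumes "plural ar"
    and "\<forall>(u,v)\<in>E. wf_trm ar u \<and> wf_trm ar v"
    and "t \<in> Tm ar 2"
    and "(t, Var 0) \<in> IdV ar E"
    and "B = free_alg ar (prolong ar (IdV ar E)) X"
    and "is_cong ar B \<delta>"
    and "sl_replica ar B \<rho>"
    and "\<psi> = cong_join ar B \<delta> \<rho>"
  shows "in_VS ar E (quot B \<delta>)
    \<and> sl_replica ar (quot B \<delta>) (cong_quot \<psi> \<delta>)
    \<and> (\<forall>c\<in>fst (quot B \<delta>) // cong_quot \<psi> \<delta>. in_Mod ar E (subalg (quot B \<delta>) c))"
proof -
  interpret B: prolonged_alg ar E t B
    using prolonged_alg_free_alg[OF assms(1-4)] assms(5) by simp
  interpret Q: prolonged_alg ar E t "quot B \<delta>"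
    by (rule B.prolonged_alg_quot[OF assms(6)])
  have "\<rho> = t_rel B t" using sl_replica_unique assms(7) B.sl_replica_t_rel by blast
  then have "cong_quot \<psi> \<delta> = t_rel (quot B \<delta>) t"
    using B.cong_quot_join_t_rel[OF assms(6)] assms(8) by simp
  then show ?thesis using Q.in_VS Q.sl_replica_t_rel Q.t_rel_classes_in_Mod by simp
qed

end
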